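(* Let $mG$ be a finite canonical misinformation game, $\Gamma=(\mathcal{AD}^*(\{mG\}),E)$ its adaptation graph, and $\Gamma'$ its loopless version. Then $mG$ is the only source node of $\Gamma'$, i.e., $mG$ is the only vertex of $\Gamma'$ with in-degree $d^-_{\Gamma'}(mG)=0$.
   Context: A normal-form game is $G=\langle N,S,P\rangle$ with finite players $N$, finite pure strategy sets $S_i$, positions $S=\times_i S_i$, payoffs $P_i:S\to\mathbb{R}$. A misinformation game $mG=\langle G^0,G^1,\dots,G^{|N|}\rangle$ consists of the actual game $G^0$ and subjective games $G^i$; it is canonical if all $G^i=\langle N,S,P^i\rangle$ differ from $G^0$ only in payoffs and in every $G^i$ all players have equally many pure strategies. $NME(mG)$ is the set of profiles $\sigma=(\sigma_1,\dots,\sigma_{|N|})$ such that each $\sigma_i$ is player $i$'s component of some Nash equilibrium of $G^i$. $\chi(\sigma)=\mathrm{supp}(\sigma_1)\times\dots\times\mathrm{supp}(\sigma_{|N|})$. For $\vec v\in S$, $mG_{\vec v}$ is obtained by replacing, in every $P^i$ ($i\ge1$), the payoff vector at position $\vec v$ by $P^0(\vec v)$. For a set $M$ of misinformation games, $\mathcal{AD}(M)=\{mG_{\vec u}: mG\in M,\sigma\in NME(mG),\vec u\in\chi(\sigma)\}$, $\mathcal{AD}^{(0)}(M)=M$, $\mathcal{AD}^{(t+1)}(M)=\mathcal{AD}^{(t)}(\mathcal{AD}(M))$, $\mathcal{AD}^*(M)=\bigcup_{t\ge0}\mathcal{AD}^{(t)}(M)$. The adaptation graph $\Gamma$ is the directed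 graph with vertex set $\mathcal{AD}^*(\{mG\})$ and an edge $(mG^1,mG^2)$ iff $mG^2=(mG^1)_{\vec v}$ for some $\sigma\in NME(mG^1)$ and $\vec v\in\chi(\sigma)$. Its loopless version $\Gamma'$ has the same vertices and the edges of $\Gamma$ with $mG^1\neq mG^2$. *)

theory Defs
  imports Complex_Main
begin

text \<open>
  A finite canonical misinformation game with players 0..<n (n = length m),
  player j having pure strategies {0..<m!j} in the actual game and in all
  subjective games.
  The payoff data is a function pay :: nat => nat list => nat => real:
  pay 0 is the actual game G^0, pay (Suc j) is the subjective game of player j
  (paper's player j+1); pay i s k is the payoff of player k at position s.
\<close>

type_synonym payoffs = "nat \<Rightarrow> nat list \<Rightarrow> nat \<Rightarrow> real"

definition positions :: "nat list \<Rightarrow> nat list set" where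
  "positions m = {s. length s = length m \<and> (\<forall>j<length m. s ! j < m ! j)}"

definition mixed_strategy :: "nat list \<Rightarrow> nat \<Rightarrow> (nat \<Rightarrow> real) \<Rightarrow> bool" where
  "mixed_strategy m j p \<longleftrightarrow> (\<forall>x. 0 \<le> p x) \<and> (\<forall>x. m ! j \<le> x \<longrightarrow> p x = 0)
      \<and> sum p {0..<m ! j} = 1"

definition mixed_profile :: "nat list \<Rightarrow> (nat \<Rightarrow> nat \<Rightarrow> real) \<Rightarrow> bool" where
  "mixed_profile m \<sigma> \<longleftrightarrow> (\<forall>j<length m. mixed_strategy m j (\<sigma> j))"

definition exp_payoff :: "nat list \<Rightarrow> (nat list \<Rightarrow> nat \<Rightarrow> real) \<Rightarrow> (nat \<Rightarrow> nat \<Rightarrow> real) \<Rightarrow> nat \<Rightarrow> real" where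
  "exp_payoff m P \<sigma> k = (\<Sum>s\<in>positions m. (\<Prod>j<length m. \<sigma> j (s ! j)) * P s k)"

definition nash_eq :: "nat list \<Rightarrow> (nat list \<Rightarrow> nat \<Rightarrow> real) \<Rightarrow> (nat \<Rightarrow> nat \<Rightarrow> real) \<Rightarrow> bool" where
  "nash_eq m P \<sigma> \<longleftrightarrow> mixed_profile m \<sigma> \<and>
     (\<forall>k<length m. \<forall>\<tau>. mixed_strategy m k \<tau> \<longrightarrow>
        exp_payoff m P (\<sigma>(k := \<tau>)) k \<le> exp_payoff m P \<sigma> k)"

definition NME :: "nat list \<Rightarrow> payoffs \<Rightarrow> (nat \<Rightarrow> nat \<Rightarrow> real) set" where
  "NME m pay = {\<sigma>. \<forall>k<length m. \<exists>\<tau>. nash_eq m (pay (Suc k)) \<tau> \<and> \<sigma> k = \<tau> k}"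

definition chi :: "nat list \<Rightarrow> (nat \<Rightarrow> nat \<Rightarrow> real) \<Rightarrow> nat list set" where
  "chi m \<sigma> = {s \<in> positions m. \<forall>j<length m. \<sigma> j (s ! j) \<noteq> 0}"

definition adapt :: "nat list \<Rightarrow> payoffs \<Rightarrow> nat list \<Rightarrow> payoffs" where
  "adapt m pay v = (\<lambda>i s. if 1 \<le> i \<and> i \<le> length m \<and> s = v then pay 0 v else pay i s)"

definition AD :: "nat list \<Rightarrow> payoffs set \<Rightarrow> payoffs set" where
  "AD m M = {adapt m pay u | pay \<sigma> u. pay \<in> M \<and> \<sigma> \<in> NME m pay \<and> u \<in> chi m \<sigma>}"

definition AD_star :: "nat list \<Rightarrow> payoffs set \<Rightarrow> payoffs set" where
  "AD_star m M = (\<Union>t. (AD m ^^ t) M)"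

definition loopless_edges :: "nat list \<Rightarrow> payoffs \<Rightarrow> (payoffs \<times> payoffs) set" where
  "loopless_edges m mG = {(p, q). p \<in> AD_star m {mG} \<and> q \<in> AD_star m {mG} \<and> p \<noteq> q \<and>
      (\<exists>\<sigma>\<in>NME m p. \<exists>v\<in>chi m \<sigma>. q = adapt m p v)}"

definition source_nodes :: "nat list \<Rightarrow> payoffs \<Rightarrow> payoffs set" where
  "source_nodes m mG = {q \<in> AD_star m {mG}. \<forall>p. (p, q) \<notin> loopless_edges m mG}"

end

theory Submission
  imports Defs
begin

text \<open>
  Adaptation never touches the actual game, and it only ever overwrites a subjective payoff
  vector by the actual one.  Hence in every vertex of \<Gamma> each subjective payoff vector is either
  the one of mG or the actual one.  An adaptation step that produces mG can therefore not have
  changed anything, so mG has no incoming edge in \<Gamma>'.  Conversely, every other vertex is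
  the endpoint of a chain of adaptations starting at mG, and the last step of that chain which
  changes the game is an edge of \<Gamma>' into it.
\<close>

lemma adapt_actual [simp]: "adapt m pay v 0 = pay 0"
  by (simp add: adapt_def)

lemma AD_star_base: "M \<subseteq> AD_star m M"
  unfolding AD_star_def by (metis UNIV_I UN_upper funpow_0)

lemma AD_star_adapt:
  assumes "p \<in> AD_star m M" and "\<sigma> \<in> NME m p" and "u \<in> chi m \<sigma>"
  shows "adapt m p u \<in> AD_star m M"
proof -
  from assms(1) obtain t where "p \<in> (AD m ^^ t) M"
    unfolding AD_star_def by blast
  with assms(2,3) have "adapt m p u \<in> (AD m ^^ Suc t) M"
    unfolding AD_def by auto
  then show ?thesis
    unfolding AD_star_def by blast
qed

lemma AD_star_induct [consumes 1, case_names base adapt]: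
  assumes "p \<in> AD_star m M"
    and base: "\<And>q. q \<in> M \<Longrightarrow> P q"
    and adapt: "\<And>q \<sigma> u. q \<in> AD_star m M \<Longrightarrow> P q \<Longrightarrow> \<sigma> \<in> NME m q \<Longrightarrow> u \<in> chi m \<sigma>
                  \<Longrightarrow> P (adapt m q u)"
  shows "P p"
proof -
  have "P p \<and> p \<in> AD_star m M" if "p \<in> (AD m ^^ t) M" for t p
    using that
  proof (induction t arbitrary: p)
    case 0
    then show ?case using base AD_star_base by auto
  next
    case (Suc t)
    then obtain q \<sigma> u where "q \<in> (AD m ^^ t) M" "\<sigma> \<in> NME m q" "u \<in> chi m \<sigma>"
      and "p = adapt m q u"
      unfolding AD_def by auto
    with Suc.IH adapt AD_star_adapt show ?case by blast
  qed
  with assms(1) show ?thesis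
    unfolding AD_star_def by blast
qed

lemma AD_star_actual:
  assumes "p \<in> AD_star m {mG}"
  shows "p 0 = mG 0"
  using assms by (induction rule: AD_star_induct) auto

lemma AD_star_payoff_cases:
  assumes "p \<in> AD_star m {mG}"
  shows "p i s = mG i s \<or> p i s = mG 0 s"
  using assms
proof (induction arbitrary: i s rule: AD_star_induct)
  case base
  then show ?case by simp
next
  case (adapt q \<sigma> u)
  then show ?case
    using AD_star_actual[OF adapt.hyps(1)] by (auto simp: adapt_def)
qed

lemma adapt_eq_imp_eq:
  assumes adapted: "adapt m p v = q"
    and entries: "\<And>i s. p i s = q i s \<or> p i s = q 0 s"
  shows "p = q"
proof (rule ext, rule ext)
  fix i s
  show "p i s = q i s"
  proof (cases "1 \<le> i \<and> i \<le> length m \<and> s = v")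
    case True
    have "q 0 = p 0"
      using adapted by auto
    moreover have "q i v = p 0 v"
      using adapted True unfolding adapt_def by auto
    ultimately show ?thesis
      using entries[of i s] True by auto
  next
    case False
    then show ?thesis
      using adapted unfolding adapt_def by auto
  qed
qed

lemma no_loopless_edge_into_root: "(p, mG) \<notin> loopless_edges m mG"
proof
  assume "(p, mG) \<in> loopless_edges m mG"
  then obtain v where "p \<noteq> mG" "p \<in> AD_star m {mG}" "adapt m p v = mG"
    unfolding loopless_edges_def by auto
  then show False
    using adapt_eq_imp_eq AD_star_payoff_cases by metis
qed

lemma AD_star_root_or_loopless_edge:
  assumes "q \<in> AD_star m {mG}"
  shows "q = mG \<or> (\<exists>p. (p, q) \<in> loopless_edges m mG)"
  using assms
proof (induction rule: AD_star_induct)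
  case base
  then show ?case by simp
next
  case (adapt p \<sigma> u)
  show ?case
  proof (cases "p = adapt m p u")
    case True
    with adapt.IH show ?thesis by simp
  next
    case False
    with adapt.hyps AD_star_adapt have "(p, adapt m p u) \<in> loopless_edges m mG"
      unfolding loopless_edges_def by blast
    then show ?thesis by blast
  qed
qed

theorem proposition18:
  fixes m :: "nat list" and mG :: payoffs
  assumes "\<forall>j<length m. 0 < m ! j"
  shows "source_nodes m mG = {mG}"
proof -
  have "mG \<in> AD_star m {mG}"
    using AD_star_base by blast
  then show ?thesis
    unfolding source_nodes_def
    using no_loopless_edge_into_root AD_star_root_or_loopless_edge by blast
qed

end
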